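(* Let $\Phi$ be a real, additive gain graph on $\{1,\dots,n\}$ with edge set $E$, and let $\mathbf{Q}=(Q_1,\dots,Q_n)\in(\mathbb{E}^d)^n$ with $Q_i\neq Q_j$ whenever $i,j$ are adjacent. Suppose the intersection $s$ of all hyperplanes of $\mathcal{H}(\Phi;\mathbf{Q})$ is nonempty. Then (a) $\Phi$ is balanced (i.e. $E$ is balanced), and (b) $s$ is the intersection of some subset of $\mathcal{H}(\Phi;\mathbf{Q})$ consisting of $d-\dim s$ hyperplanes, and any subset of $d-\dim s$ hyperplanes whose intersection is $s$ corresponds to an edge set of $\Phi$ that is a forest (contains no circle).
   Context: $\mathbb{E}^d$ is Euclidean $d$-space with distance $d(\cdot,\cdot)$; $\psi_{ij}(P)=d(P,Q_i)^2-d(P,Q_j)^2$. A real, additive gain graph $\Phi$ on vertex set $\{1,\dots,n\}$ is a finite graph (multiple edges allowed, every edge with two distinct endpoints) with gains $\phi(e;i,j)\in\mathbb{R}$ for each edge $e$ with endpoints $i,j$, satisfying $\phi(e;j,i)=-\phi(e;i,j)$. An edge set is balanced if every circle (simple closed path) in it has gain sum $0$ when read in a consistent direction. The Pythagorean arrangement $\mathcal{H}(\Phi;\mathbf{Q})$ consists of the hyperplanes $h(e)=\{P:\psi_{ij}(P)=\phi(e;i,j)\}$, one for each edge $e$ with endpoints $i,j$; a subset of hyperplanes corresponds to the set of edges indexing it. *)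

theory Defs
  imports "HOL-Analysis.Analysis"
begin

text \<open>A real additive gain graph on vertex set {1..n}: a finite set E of edge names,
  an endpoint map ends (ends e = (i,j) with i \<noteq> j, an arbitrary reference orientation),
  and g e = phi(e;i,j) for ends e = (i,j).\<close>

definition gain :: "('e \<Rightarrow> nat \<times> nat) \<Rightarrow> ('e \<Rightarrow> real) \<Rightarrow> 'e \<Rightarrow> nat \<Rightarrow> nat \<Rightarrow> real" where
  "gain ends g e i j = (if ends e = (i, j) then g e else - g e)"

definition joins :: "('e \<Rightarrow> nat \<times> nat) \<Rightarrow> 'e \<Rightarrow> nat \<Rightarrow> nat \<Rightarrow> bool" where
  "joins ends e i j \<longleftrightarrow> ends e = (i, j) \<or> ends e = (j, i)"

definition is_circle :: "('e \<Rightarrow> nat \<times> nat) \<Rightarrow> 'e set \<Rightarrow> nat list \<Rightarrow> 'e list \<Rightarrow> bool" where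
  "is_circle ends F vs es \<longleftrightarrow>
     length vs = length es \<and> length vs \<ge> 1 \<and> distinct vs \<and> distinct es \<and> set es \<subseteq> F \<and>
     (\<forall>t < length vs. joins ends (es ! t) (vs ! t) (vs ! ((t + 1) mod length vs)))"

definition circle_gain :: "('e \<Rightarrow> nat \<times> nat) \<Rightarrow> ('e \<Rightarrow> real) \<Rightarrow> nat list \<Rightarrow> 'e list \<Rightarrow> real" where
  "circle_gain ends g vs es =
     (\<Sum>t < length vs. gain ends g (es ! t) (vs ! t) (vs ! ((t + 1) mod length vs)))"

definition balanced :: "('e \<Rightarrow> nat \<times> nat) \<Rightarrow> ('e \<Rightarrow> real) \<Rightarrow> 'e set \<Rightarrow> bool" where
  "balanced ends g F \<longleftrightarrow> (\<forall>vs es. is_circle ends F vs es \<longrightarrow> circle_gain ends g vs es = 0)"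

definition forest :: "('e \<Rightarrow> nat \<times> nat) \<Rightarrow> 'e set \<Rightarrow> bool" where
  "forest ends F \<longleftrightarrow> \<not> (\<exists>vs es. is_circle ends F vs es)"

definition psi :: "(nat \<Rightarrow> 'a::euclidean_space) \<Rightarrow> nat \<Rightarrow> nat \<Rightarrow> 'a \<Rightarrow> real" where
  "psi Q i j P = dist P (Q i) ^ 2 - dist P (Q j) ^ 2"

definition pyth_hyp :: "(nat \<Rightarrow> 'a::euclidean_space) \<Rightarrow> ('e \<Rightarrow> nat \<times> nat) \<Rightarrow> ('e \<Rightarrow> real) \<Rightarrow> 'e \<Rightarrow> 'a set" where
  "pyth_hyp Q ends g e = {P. psi Q (fst (ends e)) (snd (ends e)) P = g e}"

end

theory Submission
  imports Defs
begin

text \<open>Since \<open>psi Q i j\<close> is affine in \<open>P\<close> with gradient \<open>2 (Q j - Q i)\<close>, every hyperplane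
  \<open>h(e)\<close> of the arrangement has a normal vector pointing along its edge.  At a common point \<open>P\<close>
  of all hyperplanes each gain equals \<open>d(P,Q i)\<^sup>2 - d(P,Q j)\<^sup>2\<close>, so the gains telescope to zero
  around every circle.  Dually, the signed normals along a circle telescope to zero as well;
  a set of \<open>d - dim s\<close> hyperplanes cutting out \<open>s\<close> must have linearly independent normals and
  therefore cannot contain a circle.\<close>

definition pyth_normal :: "(nat \<Rightarrow> 'a::euclidean_space) \<Rightarrow> ('e \<Rightarrow> nat \<times> nat) \<Rightarrow> 'e \<Rightarrow> 'a" where
  "pyth_normal Q ends e = 2 *\<^sub>R (Q (snd (ends e)) - Q (fst (ends e)))"

definition pyth_offset ::
    "(nat \<Rightarrow> 'a::euclidean_space) \<Rightarrow> ('e \<Rightarrow> nat \<times> nat) \<Rightarrow> ('e \<Rightarrow> real) \<Rightarrow> 'e \<Rightarrow> real" where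
  "pyth_offset Q ends g e =
     g e - (Q (fst (ends e)) \<bullet> Q (fst (ends e)) - Q (snd (ends e)) \<bullet> Q (snd (ends e)))"

lemma psi_eq_inner: "psi Q i j P = 2 *\<^sub>R (Q j - Q i) \<bullet> P + (Q i \<bullet> Q i - Q j \<bullet> Q j)"
  by (simp add: psi_def dist_norm power2_norm_eq_inner inner_diff_left inner_diff_right
      inner_commute algebra_simps)

lemma pyth_hyp_eq: "pyth_hyp Q ends g e = {P. pyth_normal Q ends e \<bullet> P = pyth_offset Q ends g e}"
  unfolding pyth_hyp_def pyth_normal_def pyth_offset_def psi_eq_inner by auto

lemma Inter_pyth_hyp_eq:
  "(\<Inter>e\<in>F. pyth_hyp Q ends g e) = {P. \<forall>e\<in>F. pyth_normal Q ends e \<bullet> P = pyth_offset Q ends g e}"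
  by (auto simp: pyth_hyp_eq)

lemma sum_cyclic_diff_eq_0:
  fixes f :: "nat \<Rightarrow> 'b::ab_group_add"
  assumes "k \<ge> 1"
  shows "(\<Sum>t<k. f t - f ((t + 1) mod k)) = 0"
proof -
  obtain m where k: "k = Suc m" using assms by (cases k) auto
  have "(\<Sum>t<k. f ((t + 1) mod k)) = (\<Sum>t<m. f (Suc t)) + f 0"
  proof -
    have "(\<Sum>t<m. f ((t + 1) mod Suc m)) = (\<Sum>t<m. f (Suc t))"
      by (rule sum.cong) auto
    then show ?thesis unfolding k by (simp add: lessThan_Suc)
  qed
  moreover have "(\<Sum>t<k. f t) = f 0 + (\<Sum>t<m. f (Suc t))"
    unfolding k by (rule sum.lessThan_Suc_shift)
  ultimately show ?thesis by (simp add: sum_subtractf)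
qed

lemma aff_dim_linear_equations:
  fixes a :: "'i \<Rightarrow> 'a::euclidean_space"
  assumes P0: "P0 \<in> {P. \<forall>i\<in>I. a i \<bullet> P = b i}"
  shows "aff_dim {P. \<forall>i\<in>I. a i \<bullet> P = b i} = int DIM('a) - int (dim (a ` I))"
proof -
  define W where "W = {y. \<forall>i\<in>I. a i \<bullet> y = 0}"
  have W_orthogonal: "W = {y \<in> UNIV. \<forall>x \<in> span (a ` I). orthogonal x y}"
  proof (intro equalityI subsetI)
    fix y assume "y \<in> W"
    then have "span (a ` I) \<subseteq> {x. x \<bullet> y = 0}"
      by (intro span_minimal) (auto simp: W_def subspace_hyperplane2)
    then show "y \<in> {y \<in> UNIV. \<forall>x \<in> span (a ` I). orthogonal x y}"
      by (auto simp: orthogonal_def)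
  qed (auto simp: W_def orthogonal_def span_base)
  have "dim W + dim (span (a ` I)) = DIM('a)"
    unfolding W_orthogonal by (subst dim_subspace_orthogonal_to_vectors) (auto simp: subspace_span)
  moreover have "{P. \<forall>i\<in>I. a i \<bullet> P = b i} = (+) P0 ` W"
  proof (intro equalityI subsetI)
    fix x assume "x \<in> {P. \<forall>i\<in>I. a i \<bullet> P = b i}"
    then have "x - P0 \<in> W" using P0 by (auto simp: W_def inner_diff_right)
    then show "x \<in> (+) P0 ` W" by (metis add.commute diff_add_cancel image_eqI)
  qed (use P0 in \<open>auto simp: W_def inner_add_right\<close>)
  moreover have "subspace W"
    unfolding W_def subspace_def by (auto simp: inner_add_right)
  ultimately show ?thesis by (simp add: aff_dim_translation_eq aff_dim_subspace)
qed

lemma linear_equations_eq_if_span: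
  fixes a :: "'i \<Rightarrow> 'a::euclidean_space"
  assumes "J \<subseteq> I" and span: "a ` I \<subseteq> span (a ` J)" and P0: "P0 \<in> {P. \<forall>i\<in>I. a i \<bullet> P = b i}"
  shows "{P. \<forall>i\<in>J. a i \<bullet> P = b i} = {P. \<forall>i\<in>I. a i \<bullet> P = b i}"
proof (intro equalityI subsetI CollectI ballI)
  fix P i assume P: "P \<in> {P. \<forall>i\<in>J. a i \<bullet> P = b i}" and i: "i \<in> I"
  have "span (a ` J) \<subseteq> {x. x \<bullet> (P - P0) = 0}"
  proof (rule span_minimal)
    show "a ` J \<subseteq> {x. x \<bullet> (P - P0) = 0}"
      using P P0 \<open>J \<subseteq> I\<close> by (auto simp: inner_diff_right)
  qed (rule subspace_hyperplane2)
  then have "a i \<bullet> (P - P0) = 0" using span i by auto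
  then show "a i \<bullet> P = b i" using P0 i by (simp add: inner_diff_right)
qed (use assms in auto)

lemma exists_subset_image_basis:
  fixes a :: "'i \<Rightarrow> 'a::euclidean_space"
  obtains J where "J \<subseteq> I" "a ` I \<subseteq> span (a ` J)" "card J = dim (a ` I)"
proof -
  obtain B where B: "B \<subseteq> a ` I" "a ` I \<subseteq> span B" "card B = dim (a ` I)"
    by (rule basis_exists)
  define J where "J = inv_into I a ` B"
  have "J \<subseteq> I" using B(1) unfolding J_def by (auto intro: inv_into_into)
  moreover have "a ` J = B" using B(1) unfolding J_def by (rule image_inv_into_cancel[OF refl])
  moreover have "card J = card B"
    using B(1) unfolding J_def by (intro card_image inj_on_inv_into)
  ultimately show thesis using B by (intro that[of J]) auto
qed

lemma inj_on_independent_if_card_eq_dim: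
  fixes a :: "'i \<Rightarrow> 'a::euclidean_space"
  assumes "finite J" "card J = dim (a ` J)"
  shows "inj_on a J" "independent (a ` J)"
proof -
  have "dim (a ` J) \<le> card (a ` J)"
    using assms(1) by (intro dim_le_card) (auto simp: span_superset)
  moreover have "card (a ` J) \<le> card J" using assms(1) by (rule card_image_le)
  ultimately have "card (a ` J) = card J" using assms(2) by linarith
  then show "inj_on a J" using assms(1) by (simp add: eq_card_imp_inj_on)
  show "independent (a ` J)"
    using card_eq_dim[of "a ` J" "a ` J"] \<open>card (a ` J) = card J\<close> assms by (simp add: span_superset)
qed

lemma dependent_image_if_nontrivial_sum:
  fixes h :: "'i \<Rightarrow> 'a::real_vector"
  assumes "finite A" "inj_on h A" "(\<Sum>t\<in>A. c t *\<^sub>R h t) = 0" "t0 \<in> A" "c t0 \<noteq> 0"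
  shows "dependent (h ` A)"
proof -
  define u where "u v = c (inv_into A h v)" for v
  have "(\<Sum>v\<in>h ` A. u v *\<^sub>R v) = (\<Sum>t\<in>A. c t *\<^sub>R h t)"
    using assms(2) by (simp add: sum.reindex u_def)
  then show ?thesis
    using assms by (subst dependent_finite) (auto simp: u_def intro!: exI[of _ u] bexI[of _ "h t0"])
qed

lemma gain_eq_dist_diff:
  assumes "joins ends e i j" "P \<in> pyth_hyp Q ends g e"
  shows "gain ends g e i j = dist P (Q i) ^ 2 - dist P (Q j) ^ 2"
proof -
  have "psi Q (fst (ends e)) (snd (ends e)) P = g e" using assms(2) by (simp add: pyth_hyp_def)
  with assms(1) show ?thesis
    unfolding joins_def gain_def psi_def by (cases "ends e = (i, j)") auto
qed

lemma balanced_if_common_point: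
  assumes P: "P \<in> (\<Inter>e\<in>F. pyth_hyp Q ends g e)"
  shows "balanced ends g F"
  unfolding balanced_def
proof (intro allI impI)
  fix vs es assume c: "is_circle ends F vs es"
  define k where "k = length vs"
  define D where "D i = dist P (Q i) ^ 2" for i
  have "circle_gain ends g vs es = (\<Sum>t<k. D (vs ! t) - D (vs ! ((t + 1) mod k)))"
    unfolding circle_gain_def k_def[symmetric]
  proof (rule sum.cong)
    fix t assume "t \<in> {..<k}"
    then have "es ! t \<in> F" "joins ends (es ! t) (vs ! t) (vs ! ((t + 1) mod k))"
      using c by (auto simp: is_circle_def k_def)
    then show "gain ends g (es ! t) (vs ! t) (vs ! ((t + 1) mod k)) = D (vs ! t) - D (vs ! ((t + 1) mod k))"
      using P unfolding D_def by (intro gain_eq_dist_diff) auto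
  qed simp
  also have "\<dots> = 0"
    using c by (intro sum_cyclic_diff_eq_0) (auto simp: is_circle_def k_def)
  finally show "circle_gain ends g vs es = 0" .
qed

lemma pyth_normal_joins:
  assumes "joins ends e i j"
  shows "(if ends e = (i, j) then 1 else - 1) *\<^sub>R pyth_normal Q ends e = 2 *\<^sub>R (Q j - Q i)"
  using assms by (auto simp: joins_def pyth_normal_def algebra_simps)

lemma circle_pyth_normals_dependent:
  assumes c: "is_circle ends F vs es" and inj: "inj_on (pyth_normal Q ends) F"
  shows "dependent (pyth_normal Q ends ` F)"
proof -
  define k where "k = length vs"
  define h where "h t = pyth_normal Q ends (es ! t)" for t
  define sg where "sg t = (if ends (es ! t) = (vs ! t, vs ! ((t + 1) mod k)) then 1 else - 1 :: real)" for t
  have k: "k \<ge> 1" "length es = k" "distinct es" "set es \<subseteq> F"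
    using c by (auto simp: is_circle_def k_def)
  have "(\<Sum>t<k. sg t *\<^sub>R h t) = (\<Sum>t<k. 2 *\<^sub>R (Q (vs ! ((t + 1) mod k)) - Q (vs ! t)))"
  proof (rule sum.cong)
    fix t assume "t \<in> {..<k}"
    then have "joins ends (es ! t) (vs ! t) (vs ! ((t + 1) mod k))"
      using c by (auto simp: is_circle_def k_def)
    then show "sg t *\<^sub>R h t = 2 *\<^sub>R (Q (vs ! ((t + 1) mod k)) - Q (vs ! t))"
      unfolding sg_def h_def by (rule pyth_normal_joins)
  qed simp
  also have "\<dots> = - 2 *\<^sub>R (\<Sum>t<k. Q (vs ! t) - Q (vs ! ((t + 1) mod k)))"
    by (simp add: scaleR_sum_right sum_negf[symmetric] algebra_simps)
  also have "\<dots> = 0" using sum_cyclic_diff_eq_0[OF k(1)] by simp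
  finally have sum0: "(\<Sum>t<k. sg t *\<^sub>R h t) = 0" .
  have es_F: "(!) es ` {..<k} \<subseteq> F" and "inj_on ((!) es) {..<k}"
    using k by (auto intro: inj_on_nth)
  then have "inj_on h {..<k}"
    unfolding h_def using inj_on_subset[OF inj] comp_inj_on[of "(!) es" "{..<k}"] by (auto simp: comp_def)
  then have "dependent (h ` {..<k})"
    using sum0 k(1) by (intro dependent_image_if_nontrivial_sum[of _ _ sg 0]) (auto simp: sg_def)
  moreover have "h ` {..<k} \<subseteq> pyth_normal Q ends ` F"
    unfolding h_def using image_mono[OF es_F, of "pyth_normal Q ends"] by (simp add: image_image)
  ultimately show ?thesis by (metis dependent_mono)
qed

lemma forest_if_pyth_normals_independent:
  assumes "inj_on (pyth_normal Q ends) F" "independent (pyth_normal Q ends ` F)"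
  shows "forest ends F"
  using assms circle_pyth_normals_dependent unfolding forest_def by blast

theorem lemma5p4:
  fixes n :: nat and E :: "'e set" and ends :: "'e \<Rightarrow> nat \<times> nat" and g :: "'e \<Rightarrow> real"
    and Q :: "nat \<Rightarrow> 'a::euclidean_space"
  assumes finE: "finite E"
    and ends_in: "\<forall>e\<in>E. fst (ends e) \<in> {1..n} \<and> snd (ends e) \<in> {1..n}"
    and no_loops: "\<forall>e\<in>E. fst (ends e) \<noteq> snd (ends e)"
    and Q_adj: "\<forall>e\<in>E. Q (fst (ends e)) \<noteq> Q (snd (ends e))"
    and nonempty: "(\<Inter>e\<in>E. pyth_hyp Q ends g e) \<noteq> {}"
  shows "balanced ends g E
    \<and> (\<exists>F\<subseteq>E. int (card F) = int DIM('a) - aff_dim (\<Inter>e\<in>E. pyth_hyp Q ends g e)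
              \<and> (\<Inter>e\<in>F. pyth_hyp Q ends g e) = (\<Inter>e\<in>E. pyth_hyp Q ends g e))
    \<and> (\<forall>F\<subseteq>E. int (card F) = int DIM('a) - aff_dim (\<Inter>e\<in>E. pyth_hyp Q ends g e)
              \<and> (\<Inter>e\<in>F. pyth_hyp Q ends g e) = (\<Inter>e\<in>E. pyth_hyp Q ends g e)
              \<longrightarrow> forest ends F)"
proof -
  let ?a = "pyth_normal Q ends"
  let ?s = "\<lambda>F. \<Inter>e\<in>F. pyth_hyp Q ends g e"
  obtain P0 where P0: "P0 \<in> ?s E" using nonempty by blast
  have aff_dim_s: "aff_dim (?s F) = int DIM('a) - int (dim (?a ` F))" if "P0 \<in> ?s F" for F
    using that unfolding Inter_pyth_hyp_eq by (rule aff_dim_linear_equations)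
  obtain J where J: "J \<subseteq> E" "?a ` E \<subseteq> span (?a ` J)" "card J = dim (?a ` E)"
    by (rule exists_subset_image_basis)
  have "?s J = ?s E"
    using J(1,2) P0 unfolding Inter_pyth_hyp_eq by (rule linear_equations_eq_if_span)
  moreover have "int (card J) = int DIM('a) - aff_dim (?s E)"
    using aff_dim_s[OF P0] J(3) by simp
  ultimately have spanning: "\<exists>F\<subseteq>E. int (card F) = int DIM('a) - aff_dim (?s E) \<and> ?s F = ?s E"
    using J(1) by blast
  have forests: "forest ends F"
    if "F \<subseteq> E" "int (card F) = int DIM('a) - aff_dim (?s E)" "?s F = ?s E" for F
  proof -
    have "aff_dim (?s E) = int DIM('a) - int (dim (?a ` F))"
      using aff_dim_s[of F] P0 that(3) by simp
    then have "card F = dim (?a ` F)" using that(2) by simp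
    then show ?thesis
      using finite_subset[OF \<open>F \<subseteq> E\<close> finE]
      by (intro forest_if_pyth_normals_independent inj_on_independent_if_card_eq_dim)
  qed
  show ?thesis
    using balanced_if_common_point[OF P0] spanning forests by (intro conjI allI impI) auto
qed

end
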